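(* For every $1<p<\infty$ there exists an Orlicz function $\Phi_p$ on $[0,\infty)$ such that $C_{\Phi_p}^\infty\cong\{t^p\}$ and $E_{\Phi_p}^\infty\not\equiv\{t^p\}$.
   Context: An Orlicz function is an increasing convex function $F$ on $[0,\infty)$ with $F(0)=0$ and $\lim_{t\to\infty}F(t)=\infty$. For an Orlicz function $F$ and $A>0$, let $E_{F,A}^\infty$ be the closure in $C[0,1]$ of the set of functions $\{x\mapsto F(xy)/F(y):\ y>A\}$ (on $[0,1]$); set $E_F^\infty:=\bigcap_{A>0}E_{F,A}^\infty$ and $C_F^\infty:=\overline{\mathrm{conv}\,E_F^\infty}$ (closure in $C[0,1]$ of the convex hull). For a set $S$ of functions on $[0,1]$ and a function $\varphi$ on $[0,1]$, write $S\cong\{\varphi\}$ if for every $H\in S$ there is $C=C(H)>0$ with $C^{-1}\varphi(t)\le H(t)\le C\varphi(t)$ for all $0<t\le 1$; write $S\equiv\{\varphi\}$ if one constant $C$ works for all $H\in S$. *)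

theory Defs
  imports "HOL-Analysis.Analysis"
begin

definition orlicz :: "(real \<Rightarrow> real) \<Rightarrow> bool" where
  "orlicz F \<longleftrightarrow> mono_on {0..} F \<and> convex_on {0..} F \<and> F 0 = 0 \<and> filterlim F at_top at_top"

text \<open>Elements of C[0,1] are represented as functions real => real that are continuous
  on [0,1] and vanish outside [0,1]; restr01 cuts a function down to [0,1].\<close>
definition restr01 :: "(real \<Rightarrow> real) \<Rightarrow> real \<Rightarrow> real" where
  "restr01 f = (\<lambda>x. if x \<in> {0..1} then f x else 0)"

definition C01 :: "(real \<Rightarrow> real) set" where
  "C01 = {H. continuous_on {0..1} H \<and> (\<forall>x. x \<notin> {0..1} \<longrightarrow> H x = 0)}"

definition sup_closure :: "(real \<Rightarrow> real) set \<Rightarrow> (real \<Rightarrow> real) set" where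
  "sup_closure S = {H \<in> C01. \<forall>\<epsilon>>0. \<exists>g\<in>S. \<forall>x\<in>{0..1}. \<bar>H x - g x\<bar> < \<epsilon>}"

definition conv_hull_fun :: "(real \<Rightarrow> real) set \<Rightarrow> (real \<Rightarrow> real) set" where
  "conv_hull_fun S = {(\<lambda>x. \<Sum>i<n. c i * f i x) | (n::nat) c f.
      (\<forall>i<n. c i \<ge> 0 \<and> f i \<in> S) \<and> (\<Sum>i<n. c i) = 1}"

definition E_FA :: "(real \<Rightarrow> real) \<Rightarrow> real \<Rightarrow> (real \<Rightarrow> real) set" where
  "E_FA F A = sup_closure {restr01 (\<lambda>x. F (x * y) / F y) | y. y > A}"

definition E_F :: "(real \<Rightarrow> real) \<Rightarrow> (real \<Rightarrow> real) set" where
  "E_F F = (\<Inter>A\<in>{0<..}. E_FA F A)"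

definition C_F :: "(real \<Rightarrow> real) \<Rightarrow> (real \<Rightarrow> real) set" where
  "C_F F = sup_closure (conv_hull_fun (E_F F))"

text \<open>S \<cong> {phi}: each H in S is equivalent to phi on (0,1] with its own constant.\<close>
definition equiv_each :: "(real \<Rightarrow> real) set \<Rightarrow> (real \<Rightarrow> real) \<Rightarrow> bool" where
  "equiv_each S \<phi> \<longleftrightarrow> (\<forall>H\<in>S. \<exists>C>0. \<forall>t\<in>{0<..1}. \<phi> t / C \<le> H t \<and> H t \<le> C * \<phi> t)"

text \<open>S \<equiv> {phi}: one constant works for all H in S.\<close>
definition equiv_unif :: "(real \<Rightarrow> real) set \<Rightarrow> (real \<Rightarrow> real) \<Rightarrow> bool" where
  "equiv_unif S \<phi> \<longleftrightarrow> (\<exists>C>0. \<forall>H\<in>S. \<forall>t\<in>{0<..1}. \<phi> t / C \<le> H t \<and> H t \<le> C * \<phi> t)"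

end

theory Submission
  imports Defs "HOL-Library.Nat_Bijection"
begin

text \<open>
  Take Phi(y) = sum_j w_j ((y - 2^j)_+)^p, a superposition of translated p-th powers whose partial
  weight sums w_0 + ... + w_n = 2^V(n) follow a piecewise linear exponent V: long flat gaps alternate
  with blocks of m 2^m steps of slope 2^-m, and every level m recurs infinitely often.
  Each term is dominated under dilation, so Phi(xy)/Phi(y) <= x^p.  Conversely, comparing Phi at the
  dyadic scales of xy and y shows that for large y the ratio is, up to o(1), at least
  kappa x^p max(a, 1 + a ln x), where a in [0,1] is the current slope.  This lower envelope survives
  uniform limits (compactness of [0,1]) and convex combinations (convexity of max), so every function
  in C_Phi is equivalent to t^p.  At the end of a block of level m, however, the dilation profiles
  converge to a function whose value at t = 2^-(m 2^m) is at most 2^(p-m) t^p, so no single constant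
  works for all of E_Phi.
\<close>

lemma powr_le_self:
  fixes u p :: real
  assumes "0 \<le> u" "u \<le> 1" "1 \<le> p"
  shows "u powr p \<le> u"
  using assms powr_le_one_le[of u p] by (cases "u = 0") auto

lemma real_le_two_power: "real j \<le> (2::real) ^ j"
  by (metis less_exp less_imp_le of_nat_le_iff of_nat_numeral of_nat_power)

lemma convex_on_powr_nonneg:
  fixes p :: real
  assumes "1 \<le> p"
  shows "convex_on {0..} (\<lambda>x. x powr p)"
proof (rule convex_onI)
  fix t s1 s2 :: real
  assume t: "0 < t" "t < 1" and s: "s1 \<in> {0..}" "s2 \<in> {0..}"
  consider "s1 = 0" | "s2 = 0" | "0 < s1" "0 < s2" using s by fastforce
  then show "((1 - t) *\<^sub>R s1 + t *\<^sub>R s2) powr p \<le> (1 - t) * s1 powr p + t * s2 powr p"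
  proof cases
    case 1
    have "(t * s2) powr p = t powr p * s2 powr p" using t s by (simp add: powr_mult)
    also have "\<dots> \<le> t * s2 powr p" using powr_le_self[of t p] t assms by (intro mult_right_mono) auto
    finally show ?thesis using 1 by simp
  next
    case 2
    have "((1 - t) * s1) powr p = (1 - t) powr p * s1 powr p" using t s by (simp add: powr_mult)
    also have "\<dots> \<le> (1 - t) * s1 powr p" using powr_le_self[of "1 - t" p] t assms by (intro mult_right_mono) auto
    finally show ?thesis using 2 by simp
  next
    case 3
    then show ?thesis using convex_onD[OF powr_convex[OF assms], of t s1 s2] t by simp
  qed
qed simp

lemma convex_on_hinge_powr:
  fixes p b :: real
  assumes "1 \<le> p"
  shows "convex_on UNIV (\<lambda>y. (max 0 (y - b)) powr p)"
proof (rule convex_onI)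
  fix t x y :: real
  assume t: "0 < t" "t < 1"
  have "max 0 ((1 - t) * x + t * y - b) \<le> (1 - t) * max 0 (x - b) + t * max 0 (y - b)"
  proof -
    have "(1 - t) * x + t * y - b = (1 - t) * (x - b) + t * (y - b)" by (simp add: algebra_simps)
    moreover have "(1 - t) * (x - b) \<le> (1 - t) * max 0 (x - b)" "t * (y - b) \<le> t * max 0 (y - b)"
      using t by (auto intro: mult_left_mono)
    moreover have "0 \<le> (1 - t) * max 0 (x - b) + t * max 0 (y - b)" using t by simp
    ultimately show ?thesis by linarith
  qed
  then have "(max 0 ((1 - t) * x + t * y - b)) powr p
      \<le> ((1 - t) * max 0 (x - b) + t * max 0 (y - b)) powr p"
    using assms by (intro powr_mono2) auto
  also have "\<dots> \<le> (1 - t) * (max 0 (x - b)) powr p + t * (max 0 (y - b)) powr p"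
    using convex_onD[OF convex_on_powr_nonneg[OF assms], of t "max 0 (x - b)" "max 0 (y - b)"] t
    by simp
  finally show "(max 0 ((1 - t) *\<^sub>R x + t *\<^sub>R y - b)) powr p
      \<le> (1 - t) * (max 0 (x - b)) powr p + t * (max 0 (y - b)) powr p" by simp
qed simp

lemma hinge_scale_le:
  fixes x y b :: real
  assumes "0 \<le> x" "x \<le> 1" "0 \<le> b"
  shows "max 0 (x * y - b) \<le> x * max 0 (y - b)"
proof (cases "y \<le> b")
  case True
  have "x * y \<le> x * b" using True assms by (intro mult_left_mono) auto
  also have "\<dots> \<le> b" using assms by (simp add: mult_left_le_one_le)
  finally show ?thesis using assms by simp
next
  case False
  have "x * b \<le> b" using assms by (simp add: mult_left_le_one_le)
  then have "x * y - b \<le> x * (y - b)" by (simp add: algebra_simps)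
  then show ?thesis using False assms by simp
qed

lemma powr_minus_hinge_le:
  fixes p u z \<eta> :: real
  assumes p: "1 < p" and u: "0 \<le> u" "u \<le> z" and z: "1 \<le> z" and \<eta>: "0 < \<eta>" "\<eta> \<le> 1"
  shows "u powr p - (max 0 (u - \<eta>)) powr p \<le> p * \<eta> * z powr p"
proof (cases "u \<le> \<eta>")
  case True
  have "u powr p \<le> \<eta>" using powr_le_self[of u p] True u \<eta> p by auto
  also have "\<dots> \<le> p * \<eta> * z powr p"
  proof -
    have "1 * 1 \<le> p * z powr p" using z p by (intro mult_mono) (auto simp: ge_one_powr_ge_zero)
    then show ?thesis using \<eta> by (simp add: mult.assoc mult_le_cancel_left1)
  qed
  finally show ?thesis using True by simp
next
  case False
  then have u0: "0 < u" "0 < u - \<eta>" using \<eta> by auto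
  have d: "((\<lambda>x. x powr p) has_real_derivative p * u powr (p - 1)) (at u within {0<..})"
    using u0 by (auto intro!: derivative_eq_intros simp: powr_diff)
  have "(u - \<eta>) powr p - u powr p \<ge> p * u powr (p - 1) * ((u - \<eta>) - u)"
    by (rule convex_on_imp_above_tangent[OF powr_convex]) (use p u0 d in \<open>auto simp: interior_open\<close>)
  then have "u powr p - (max 0 (u - \<eta>)) powr p \<le> p * u powr (p - 1) * \<eta>"
    using u0 by (simp add: algebra_simps)
  also have "\<dots> \<le> p * z powr p * \<eta>"
  proof -
    have "u powr (p - 1) \<le> z powr (p - 1)" using u u0 p by (intro powr_mono2) auto
    also have "\<dots> \<le> z powr p" using z p by (intro powr_mono) auto
    finally show ?thesis using p \<eta> by (intro mult_right_mono mult_left_mono) auto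
  qed
  finally show ?thesis by (simp add: algebra_simps)
qed

lemma abs_ratio_diff_le:
  fixes c q Y X Y' e :: real
  assumes c: "0 < c" and q: "0 \<le> q" "q \<le> Y" and Y: "0 < Y" and e: "0 \<le> e" "e \<le> 1/2"
    and X: "c * (q - e * Y) \<le> X" "X \<le> c * q" "0 \<le> X"
    and Y': "c * (Y - e * Y) \<le> Y'" "Y' \<le> c * Y"
  shows "\<bar>X / Y' - q / Y\<bar> \<le> 2 * e"
proof -
  have Yl: "0 < c * (Y - e * Y)" using c Y e by (simp add: mult_pos_pos algebra_simps)
  then have Y'p: "0 < Y'" using Y' by linarith
  have "X / Y' \<le> (c * q) / (c * (Y - e * Y))"
    using X Y' Yl c q by (intro frac_le) auto
  also have "\<dots> = (q / Y) / (1 - e)" using c Y e by (simp add: field_simps)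
  also have "\<dots> \<le> q / Y + 2 * e"
  proof -
    have key: "Q \<le> (Q + 2 * e) * (1 - e)" if "Q * e \<le> e" for Q :: real
    proof -
      have "2 * e * e \<le> e" using e by (simp add: mult_left_le_one_le)
      then show ?thesis using that by (simp add: algebra_simps)
    qed
    have "q / Y \<le> 1" "0 \<le> q / Y" using q Y by auto
    then have "q / Y \<le> (q / Y + 2 * e) * (1 - e)" using e by (intro key) (metis mult_left_le_one_le)
    moreover have "0 < 1 - e" using e by simp
    ultimately show ?thesis by (simp only: pos_divide_le_eq)
  qed
  finally have up: "X / Y' \<le> q / Y + 2 * e" .
  have lo: "q / Y - e \<le> X / Y'"
  proof (cases "q - e * Y \<le> 0")
    case True
    then have "q / Y \<le> e" using Y by (simp add: divide_le_eq)
    moreover have "0 \<le> X / Y'" using X Y'p by simp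
    ultimately show ?thesis by linarith
  next
    case False
    have "(c * (q - e * Y)) / (c * Y) \<le> X / Y'"
      using X Y' Y'p False c by (intro frac_le) auto
    moreover have "(c * (q - e * Y)) / (c * Y) = q / Y - e" using c Y by (simp add: field_simps)
    ultimately show ?thesis by simp
  qed
  show ?thesis using up lo e by linarith
qed

lemma exists_dyadic_bracket:
  fixes y :: real
  assumes "1 < y"
  shows "\<exists>N. 2 ^ N < y \<and> y \<le> 2 ^ Suc N"
proof -
  obtain n where n: "y < 2 ^ n" using real_arch_pow[of 2 y] by auto
  define N' where "N' = (LEAST n. y \<le> (2::real) ^ n)"
  have yN': "y \<le> 2 ^ N'" unfolding N'_def by (rule LeastI[of _ n]) (use n in auto)
  then obtain N where N: "N' = Suc N" using assms by (cases N') auto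
  have "\<not> y \<le> 2 ^ N"
    using not_less_Least[of N "\<lambda>n. y \<le> (2::real) ^ n"] N unfolding N'_def by simp
  then show ?thesis using yN' N by (intro exI[of _ N]) auto
qed

definition lower_env :: "real \<Rightarrow> real \<Rightarrow> real \<Rightarrow> real \<Rightarrow> real" where
  "lower_env \<kappa> p a x = \<kappa> * x powr p * max a (1 + a * ln x)"

definition enveloped :: "real \<Rightarrow> real \<Rightarrow> (real \<Rightarrow> real) \<Rightarrow> bool" where
  "enveloped \<kappa> p H \<longleftrightarrow> (\<forall>x\<in>{0..1}. H x \<le> x powr p)
     \<and> (\<exists>a\<in>{0..1}. \<forall>x\<in>{0<..1}. lower_env \<kappa> p a x \<le> H x)"

lemma lower_env_ge_powr:
  assumes "0 \<le> \<kappa>" "a \<in> {0..1}" "0 < x"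
  shows "\<kappa> * (if a > 0 then a else 1) * x powr p \<le> lower_env \<kappa> p a x"
proof -
  have "(if a > 0 then a else 1) \<le> max a (1 + a * ln x)" using assms by auto
  then show ?thesis unfolding lower_env_def using assms
    by (metis mult.commute mult.left_commute mult_left_mono powr_ge_zero zero_le_mult_iff)
qed

lemma lower_env_le_self:
  assumes "0 \<le> \<kappa>" "\<kappa> \<le> 1" "1 \<le> p" "a \<in> {0..1}" "x \<in> {0<..1}"
  shows "lower_env \<kappa> p a x \<le> x"
proof -
  have "max a (1 + a * ln x) \<le> 1" using assms by (simp add: mult_nonneg_nonpos)
  moreover have "x powr p \<le> x" using assms by (intro powr_le_self) auto
  moreover have "0 \<le> max a (1 + a * ln x)" using assms by auto
  ultimately have "\<kappa> * x powr p * max a (1 + a * ln x) \<le> 1 * x * 1"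
    using assms by (intro mult_mono) auto
  then show ?thesis unfolding lower_env_def by simp
qed

lemma lower_env_limit:
  assumes a: "\<And>n. a n \<in> {0..1}" and d: "d \<longlonglongrightarrow> 0"
    and below: "\<And>n x. x \<in> {0<..1} \<Longrightarrow> lower_env \<kappa> p (a n) x - d n \<le> H x"
  shows "\<exists>b\<in>{0..1}. \<forall>x\<in>{0<..1}. lower_env \<kappa> p b x \<le> H x"
proof -
  obtain b r where b: "b \<in> {0..1}" "strict_mono r" "(a \<circ> r) \<longlonglongrightarrow> b"
    using seq_compactE[OF compact_imp_seq_compact[OF compact_Icc], of a] a by metis
  show ?thesis
  proof (intro bexI[OF _ b(1)] ballI)
    fix x :: real assume x: "x \<in> {0<..1}"
    have "(\<lambda>n. lower_env \<kappa> p (a (r n)) x - d (r n)) \<longlonglongrightarrow> lower_env \<kappa> p b x - 0"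
      unfolding lower_env_def using b(3) LIMSEQ_subseq_LIMSEQ[OF d b(2)]
      by (intro tendsto_intros) (auto simp: comp_def)
    then have "(\<lambda>n. lower_env \<kappa> p (a (r n)) x - d (r n)) \<longlonglongrightarrow> lower_env \<kappa> p b x" by simp
    then show "lower_env \<kappa> p b x \<le> H x"
      by (rule LIMSEQ_le_const2) (use below x in auto)
  qed
qed

lemma enveloped_if_approximable:
  assumes "\<And>e. e > 0 \<Longrightarrow> \<exists>g a. a \<in> {0..1} \<and> (\<forall>x\<in>{0..1}. \<bar>H x - g x\<bar> < e \<and> g x \<le> x powr p)
             \<and> (\<forall>x\<in>{0<..1}. lower_env \<kappa> p a x - e \<le> g x)"
  shows "enveloped \<kappa> p H"
  unfolding enveloped_def
proof
  show "\<forall>x\<in>{0..1}. H x \<le> x powr p"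
  proof
    fix x :: real assume x: "x \<in> {0..1}"
    show "H x \<le> x powr p"
    proof (rule field_le_epsilon)
      fix e :: real assume "e > 0"
      then obtain g where "\<forall>x\<in>{0..1}. \<bar>H x - g x\<bar> < e \<and> g x \<le> x powr p" using assms by blast
      then show "H x \<le> x powr p + e" using x by fastforce
    qed
  qed
  have "\<forall>n. \<exists>a g. a \<in> {0..1} \<and> (\<forall>x\<in>{0..1}. \<bar>H x - g x\<bar> < 1 / Suc n)
          \<and> (\<forall>x\<in>{0<..1}. lower_env \<kappa> p a x - 1 / Suc n \<le> g x)"
    using assms by (metis of_nat_0_less_iff zero_less_Suc zero_less_divide_1_iff)
  then obtain a g where a: "\<And>n. a n \<in> {0..1}"
    and g: "\<And>n x. x \<in> {0..1} \<Longrightarrow> \<bar>H x - g n x\<bar> < 1 / Suc n"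
    and below: "\<And>n x. x \<in> {0<..1} \<Longrightarrow> lower_env \<kappa> p (a n) x - 1 / Suc n \<le> g n x"
    by metis
  have "(\<lambda>n. 2 * (1 / real (Suc n))) \<longlonglongrightarrow> 2 * 0"
    by (intro tendsto_mult tendsto_const LIMSEQ_Suc[OF lim_inverse_n'])
  moreover have "lower_env \<kappa> p (a n) x - 2 * (1 / Suc n) \<le> H x" if "x \<in> {0<..1}" for n x
    using g[of x n] below[of x n] that by fastforce
  ultimately show "\<exists>a\<in>{0..1}. \<forall>x\<in>{0<..1}. lower_env \<kappa> p a x \<le> H x"
    by (intro lower_env_limit[OF a]) simp_all
qed

lemma enveloped_sup_closure:
  assumes "\<And>g. g \<in> S \<Longrightarrow> enveloped \<kappa> p g" and "H \<in> sup_closure S"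
  shows "enveloped \<kappa> p H"
proof (rule enveloped_if_approximable)
  fix e :: real assume "e > 0"
  then obtain g where "g \<in> S" "\<forall>x\<in>{0..1}. \<bar>H x - g x\<bar> < e"
    using assms(2) unfolding sup_closure_def by blast
  with assms(1)[of g] \<open>e > 0\<close> show "\<exists>g a. a \<in> {0..1} \<and> (\<forall>x\<in>{0..1}. \<bar>H x - g x\<bar> < e \<and> g x \<le> x powr p)
             \<and> (\<forall>x\<in>{0<..1}. lower_env \<kappa> p a x - e \<le> g x)"
    unfolding enveloped_def by (smt (verit))
qed

lemma max_convex_comb_le:
  fixes c a :: "nat \<Rightarrow> real"
  assumes "\<forall>i<n. 0 \<le> c i" "(\<Sum>i<n. c i) = 1"
  shows "max (\<Sum>i<n. c i * a i) (1 + (\<Sum>i<n. c i * a i) * L) \<le> (\<Sum>i<n. c i * max (a i) (1 + a i * L))"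
proof -
  have "1 + (\<Sum>i<n. c i * a i) * L = (\<Sum>i<n. c i * (1 + a i * L))"
    using assms(2) by (simp add: sum.distrib sum_distrib_left sum_distrib_right algebra_simps)
  moreover have "(\<Sum>i<n. c i * a i) \<le> (\<Sum>i<n. c i * max (a i) (1 + a i * L))"
    "(\<Sum>i<n. c i * (1 + a i * L)) \<le> (\<Sum>i<n. c i * max (a i) (1 + a i * L))"
    using assms(1) by (auto intro!: sum_mono mult_left_mono)
  ultimately show ?thesis by simp
qed

lemma enveloped_conv_hull_fun:
  assumes \<kappa>: "0 \<le> \<kappa>" and env: "\<And>g. g \<in> S \<Longrightarrow> enveloped \<kappa> p g" and G: "G \<in> conv_hull_fun S"
  shows "enveloped \<kappa> p G"
proof -
  obtain n :: nat and c :: "nat \<Rightarrow> real" and f where G_eq: "G = (\<lambda>x. \<Sum>i<n. c i * f i x)"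
    and cf: "\<forall>i<n. 0 \<le> c i \<and> f i \<in> S" and c1: "(\<Sum>i<n. c i) = 1"
    using G unfolding conv_hull_fun_def by blast
  have "\<forall>i<n. \<exists>a. a \<in> {0..1} \<and> (\<forall>x\<in>{0<..1}. lower_env \<kappa> p a x \<le> f i x)"
    using env cf unfolding enveloped_def by blast
  then obtain a where a: "\<And>i. i < n \<Longrightarrow> a i \<in> {0..1}"
    and below: "\<And>i x. i < n \<Longrightarrow> x \<in> {0<..1} \<Longrightarrow> lower_env \<kappa> p (a i) x \<le> f i x" by metis
  define b where "b = (\<Sum>i<n. c i * a i)"
  have "0 \<le> b" unfolding b_def using a cf by (auto intro!: sum_nonneg)
  moreover have "b \<le> (\<Sum>i<n. c i * 1)" unfolding b_def using a cf by (intro sum_mono mult_left_mono) auto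
  ultimately have b: "b \<in> {0..1}" using c1 by simp
  have "G x \<le> x powr p" if "x \<in> {0..1}" for x
  proof -
    have "G x \<le> (\<Sum>i<n. c i * x powr p)"
      unfolding G_eq using cf env that by (auto simp: enveloped_def intro!: sum_mono mult_left_mono)
    also have "\<dots> = x powr p" using c1 by (simp add: sum_distrib_right[symmetric])
    finally show ?thesis .
  qed
  moreover have "lower_env \<kappa> p b x \<le> G x" if "x \<in> {0<..1}" for x
  proof -
    have "lower_env \<kappa> p b x \<le> \<kappa> * x powr p * (\<Sum>i<n. c i * max (a i) (1 + a i * ln x))"
      unfolding lower_env_def b_def using max_convex_comb_le[of n c a "ln x"] cf c1 \<kappa>
      by (intro mult_left_mono) auto
    also have "\<dots> = (\<Sum>i<n. c i * lower_env \<kappa> p (a i) x)"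
      by (simp add: lower_env_def sum_distrib_left algebra_simps)
    also have "\<dots> \<le> G x" unfolding G_eq using below cf that by (auto intro!: sum_mono mult_left_mono)
    finally show ?thesis .
  qed
  ultimately show ?thesis unfolding enveloped_def using b by blast
qed

lemma E_F_enveloped:
  assumes ratio_le: "\<And>y x. 1 < y \<Longrightarrow> x \<in> {0..1} \<Longrightarrow> F (x * y) / F y \<le> x powr p"
    and ratio_ge: "\<And>e. e > 0 \<Longrightarrow> \<exists>A. \<forall>y>A. \<exists>a\<in>{0..1}. \<forall>x\<in>{0<..1}.
                     lower_env \<kappa> p a x - e \<le> F (x * y) / F y"
    and H: "H \<in> E_F F"
  shows "enveloped \<kappa> p H"
proof (rule enveloped_if_approximable)
  fix e :: real assume "e > 0"
  then obtain A where A: "\<forall>y>A. \<exists>a\<in>{0..1}. \<forall>x\<in>{0<..1}. lower_env \<kappa> p a x - e \<le> F (x * y) / F y"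
    using ratio_ge by blast
  have "H \<in> E_FA F (max A 1)" using H unfolding E_F_def by simp
  then obtain y where y: "max A 1 < y" "\<forall>x\<in>{0..1}. \<bar>H x - restr01 (\<lambda>x. F (x * y) / F y) x\<bar> < e"
    using \<open>e > 0\<close> unfolding E_FA_def sup_closure_def by blast
  obtain a where "a \<in> {0..1}" "\<forall>x\<in>{0<..1}. lower_env \<kappa> p a x - e \<le> F (x * y) / F y"
    using A y(1) by auto
  with y ratio_le show "\<exists>g a. a \<in> {0..1} \<and> (\<forall>x\<in>{0..1}. \<bar>H x - g x\<bar> < e \<and> g x \<le> x powr p)
             \<and> (\<forall>x\<in>{0<..1}. lower_env \<kappa> p a x - e \<le> g x)"
    by (intro exI[of _ "\<lambda>x. F (x * y) / F y"] exI[of _ a]) (auto simp: restr01_def)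
qed

lemma C_F_enveloped:
  assumes "0 \<le> \<kappa>" "\<And>H. H \<in> E_F F \<Longrightarrow> enveloped \<kappa> p H" "G \<in> C_F F"
  shows "enveloped \<kappa> p G"
  using assms enveloped_sup_closure enveloped_conv_hull_fun unfolding C_F_def by metis

lemma equiv_each_powr_if_enveloped:
  assumes \<kappa>: "0 < \<kappa>" "\<kappa> \<le> 1" and env: "\<And>G. G \<in> S \<Longrightarrow> enveloped \<kappa> p G"
  shows "equiv_each S (\<lambda>t. t powr p)"
  unfolding equiv_each_def
proof
  fix G assume "G \<in> S"
  then obtain a where a: "a \<in> {0..1}" "\<forall>x\<in>{0<..1}. lower_env \<kappa> p a x \<le> G x"
    and up: "\<forall>x\<in>{0..1}. G x \<le> x powr p"
    using env unfolding enveloped_def by blast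
  define C where "C = 1 / (\<kappa> * (if a > 0 then a else 1))"
  have C: "0 < C" "1 \<le> C" using a \<kappa> by (auto simp: C_def mult_le_one)
  show "\<exists>C>0. \<forall>t\<in>{0<..1}. t powr p / C \<le> G t \<and> G t \<le> C * t powr p"
  proof (intro exI[of _ C] conjI ballI)
    show "0 < C" by (fact C)
    fix t :: real assume t: "t \<in> {0<..1}"
    have "t powr p / C = \<kappa> * (if a > 0 then a else 1) * t powr p" using a \<kappa> by (simp add: C_def)
    also have "\<dots> \<le> lower_env \<kappa> p a t" using a \<kappa> t by (intro lower_env_ge_powr) auto
    also have "\<dots> \<le> G t" using a(2) t by blast
    finally show "t powr p / C \<le> G t" .
    have "G t \<le> t powr p" using up t by auto
    also have "\<dots> \<le> C * t powr p" using C by (metis mult_1 mult_right_mono powr_ge_zero)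
    finally show "G t \<le> C * t powr p" .
  qed
qed

definition level :: "nat \<Rightarrow> nat" where
  "level k = Suc (fst (prod_decode k))"

definition slope :: "nat \<Rightarrow> real" where
  "slope m = (1/2) ^ m"

definition block_len :: "nat \<Rightarrow> nat" where
  "block_len m = m * 2 ^ m"

text \<open>Stage k is a gap of Suc k indices, where log_slope vanishes, followed by a block of
  block_len (level k) indices, where it equals slope (level k); the sum defining log_slope has at
  most one nonzero term.\<close>

fun stage_start :: "nat \<Rightarrow> nat" where
  "stage_start 0 = 0"
| "stage_start (Suc k) = stage_start k + Suc k + block_len (level k)"

abbreviation block_start :: "nat \<Rightarrow> nat" where
  "block_start k \<equiv> stage_start k + Suc k"

definition log_slope :: "nat \<Rightarrow> real" where
  "log_slope i = (\<Sum>k<Suc i. if block_start k \<le> i \<and> i < stage_start (Suc k) then slope (level k) else 0)"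

definition log_weight :: "nat \<Rightarrow> real" where
  "log_weight n = (\<Sum>i<n. log_slope i)"

definition weight :: "nat \<Rightarrow> real" where
  "weight j = (if j = 0 then 1 else 2 powr log_weight j - 2 powr log_weight (j - 1))"

definition block_weight :: "nat \<Rightarrow> nat \<Rightarrow> real" where
  "block_weight m i = 2 powr (slope m * (i + 1)) - 2 powr (slope m * i)"

lemma level_pos: "1 \<le> level k"
  by (simp add: level_def)

lemma level_recurs: "1 \<le> m \<Longrightarrow> \<exists>k\<ge>n. level k = m"
  by (intro exI[of _ "prod_encode (m - 1, n)"]) (auto simp: level_def le_prod_encode_2)

lemma block_len_pos: "1 \<le> m \<Longrightarrow> 1 \<le> block_len m"
  by (simp add: block_len_def)

lemma slope_pos: "0 < slope m"
  by (simp add: slope_def)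

lemma slope_le_half: "1 \<le> m \<Longrightarrow> slope m \<le> 1/2"
  unfolding slope_def using power_decreasing[of 1 m "1/2 :: real"] by simp

lemma slope_level_in_unit: "slope (level k) \<in> {0..1}"
  using slope_pos[of "level k"] slope_le_half[OF level_pos[of k]] by simp

lemma slope_mult_block_len: "slope m * block_len m = m"
  by (simp add: slope_def block_len_def power_divide)

lemma stage_start_mono: "k1 \<le> k2 \<Longrightarrow> stage_start k1 \<le> stage_start k2"
  by (induction k2) (auto simp: le_Suc_eq)

lemma le_stage_start: "k \<le> stage_start k"
  by (induction k) auto

lemma block_start_less_stage_start: "block_start k < stage_start (Suc k)"
  using block_len_pos[OF level_pos, of k] by simp

lemma log_slope_in_block:
  assumes "block_start k \<le> i" "i < stage_start (Suc k)"
  shows "log_slope i = slope (level k)"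
proof -
  have "(block_start k' \<le> i \<and> i < stage_start (Suc k')) \<longleftrightarrow> k' = k" for k'
  proof
    assume h: "block_start k' \<le> i \<and> i < stage_start (Suc k')"
    show "k' = k"
    proof (rule ccontr)
      assume "k' \<noteq> k"
      then have "stage_start (Suc k') \<le> stage_start k \<or> stage_start (Suc k) \<le> stage_start k'"
        by (metis Suc_leI linorder_neqE_nat stage_start_mono)
      then show False using h assms by auto
    qed
  qed (use assms in auto)
  then have "log_slope i = (\<Sum>k'<Suc i. if k' = k then slope (level k) else 0)"
    unfolding log_slope_def by (intro sum.cong) auto
  moreover have "k < Suc i" using le_stage_start[of k] assms by simp
  ultimately show ?thesis by simp
qed

lemma log_slope_in_gap:
  assumes "stage_start k \<le> i" "i < block_start k"
  shows "log_slope i = 0"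
proof -
  have "\<not> (block_start k' \<le> i \<and> i < stage_start (Suc k'))" for k'
  proof
    assume h: "block_start k' \<le> i \<and> i < stage_start (Suc k')"
    consider "k' < k" | "k' = k" | "k < k'" by linarith
    then show False
    proof cases
      case 1
      then have "stage_start (Suc k') \<le> stage_start k" by (intro stage_start_mono) simp
      then show False using h assms by simp
    next
      case 3
      then have "stage_start (Suc k) \<le> stage_start k'" by (intro stage_start_mono) simp
      then show False using h assms block_start_less_stage_start[of k] by simp
    qed (use h assms in simp)
  qed
  then show ?thesis unfolding log_slope_def by (intro sum.neutral) auto
qed

lemma log_slope_nonneg: "0 \<le> log_slope i"
  unfolding log_slope_def using slope_pos by (intro sum_nonneg) (simp add: less_imp_le)

lemma log_weight_diff:
  "m1 \<le> m2 \<Longrightarrow> log_weight m2 - log_weight m1 = (\<Sum>i\<in>{m1..<m2}. log_slope i)"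
proof -
  assume "m1 \<le> m2"
  then have "log_weight m2 = (\<Sum>i\<in>{0..<m1}. log_slope i) + (\<Sum>i\<in>{m1..<m2}. log_slope i)"
    unfolding log_weight_def atLeast0LessThan[symmetric] by (simp add: sum.atLeastLessThan_concat)
  then show ?thesis unfolding log_weight_def atLeast0LessThan[symmetric] by simp
qed

lemma log_weight_mono: "m1 \<le> m2 \<Longrightarrow> log_weight m1 \<le> log_weight m2"
  using log_weight_diff[of m1 m2] sum_nonneg[of "{m1..<m2}" log_slope] log_slope_nonneg by simp

lemma weight_nonneg: "0 \<le> weight j"
  unfolding weight_def using log_weight_mono[of "j - 1" j] by auto

lemma weight_Suc: "weight (Suc n) = 2 powr log_weight (Suc n) - 2 powr log_weight n"
  by (simp add: weight_def)

lemma sum_weight: "(\<Sum>j<Suc n. weight j) = 2 powr log_weight n"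
proof (induction n)
  case 0
  then show ?case by (simp add: weight_def log_weight_def)
next
  case (Suc n)
  then show ?case by (simp add: weight_Suc)
qed

lemma log_weight_in_gap:
  assumes "stage_start k \<le> j" "j \<le> block_start k"
  shows "log_weight j = log_weight (stage_start k)"
proof -
  have "log_weight j - log_weight (stage_start k) = (\<Sum>i\<in>{stage_start k..<j}. log_slope i)"
    using log_weight_diff assms by simp
  also have "\<dots> = 0" using assms by (intro sum.neutral) (auto intro: log_slope_in_gap)
  finally show ?thesis by simp
qed

lemma log_weight_in_block:
  assumes "i \<le> block_len (level k)"
  shows "log_weight (block_start k + i) = log_weight (block_start k) + slope (level k) * i"
proof -
  have "log_weight (block_start k + i) - log_weight (block_start k)
      = (\<Sum>j\<in>{block_start k..<block_start k + i}. log_slope j)"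
    using log_weight_diff by simp
  also have "\<dots> = (\<Sum>j\<in>{block_start k..<block_start k + i}. slope (level k))"
    using assms by (intro sum.cong refl log_slope_in_block) auto
  finally show ?thesis by (simp add: algebra_simps)
qed

lemma weight_in_gap:
  assumes "stage_start k < j" "j \<le> block_start k"
  shows "weight j = 0"
proof -
  have "log_weight j = log_weight (stage_start k)" "log_weight (j - 1) = log_weight (stage_start k)"
    using assms by (auto intro!: log_weight_in_gap)
  then show ?thesis using assms unfolding weight_def by simp
qed

lemma weight_in_block:
  assumes "i < block_len (level k)"
  shows "weight (Suc (block_start k + i)) = 2 powr log_weight (block_start k) * block_weight (level k) i"
proof -
  have next_weight: "log_weight (Suc (block_start k + i))
      = log_weight (block_start k) + slope (level k) * real (Suc i)"
    using log_weight_in_block[of "Suc i" k] assms by simp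
  have this_weight: "log_weight (block_start k + i) = log_weight (block_start k) + slope (level k) * real i"
    using log_weight_in_block[of i k] assms by simp
  show ?thesis
    unfolding weight_Suc next_weight this_weight block_weight_def
    by (simp add: powr_add right_diff_distrib add.commute)
qed

lemma sum_weight_before_block:
  "(\<Sum>j<Suc (stage_start k). weight j) = 2 powr log_weight (block_start k)"
  using sum_weight[of "stage_start k"] log_weight_in_gap[of k "block_start k"] by simp

lemma block_weight_nonneg: "0 \<le> block_weight m i"
  unfolding block_weight_def slope_def by simp

lemma sum_block_weight: "(\<Sum>i<n. block_weight m i) = 2 powr (slope m * n) - 1"
  by (induction n) (auto simp: block_weight_def)

lemma log_weight_increment_le:
  assumes "stage_start k \<le> m1" "m1 \<le> m2" "m2 \<le> block_start (Suc k)"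
  shows "log_weight m2 - log_weight m1 \<le> real (m2 - m1) * slope (level k)"
    and "log_weight m2 - log_weight m1 \<le> real (level k)"
proof -
  define B where "B = {block_start k..<stage_start (Suc k)}"
  have "log_slope i \<le> (if i \<in> B then slope (level k) else 0)" if "i \<in> {m1..<m2}" for i
  proof -
    consider "i < block_start k" | "i \<in> B" | "stage_start (Suc k) \<le> i"
      unfolding B_def atLeastLessThan_iff by linarith
    then show ?thesis
    proof cases
      case 1 then show ?thesis using log_slope_in_gap[of k i] that assms unfolding B_def by auto
    next
      case 2 then show ?thesis using log_slope_in_block[of k i] unfolding B_def by auto
    next
      case 3 then show ?thesis using log_slope_in_gap[of "Suc k" i] that assms unfolding B_def by auto
    qed
  qed
  then have "log_weight m2 - log_weight m1 \<le> (\<Sum>i\<in>{m1..<m2}. if i \<in> B then slope (level k) else 0)"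
    unfolding log_weight_diff[OF assms(2)] by (intro sum_mono) auto
  also have "\<dots> = real (card ({m1..<m2} \<inter> B)) * slope (level k)"
    by (simp add: sum.If_cases)
  finally have le_card: "log_weight m2 - log_weight m1 \<le> real (card ({m1..<m2} \<inter> B)) * slope (level k)" .
  have "card ({m1..<m2} \<inter> B) \<le> m2 - m1" "card ({m1..<m2} \<inter> B) \<le> block_len (level k)"
    using card_mono[of "{m1..<m2}" "{m1..<m2} \<inter> B"] card_mono[of B "{m1..<m2} \<inter> B"]
    unfolding B_def by auto
  then have "real (card ({m1..<m2} \<inter> B)) * slope (level k) \<le> real (m2 - m1) * slope (level k)"
    "real (card ({m1..<m2} \<inter> B)) * slope (level k) \<le> real (block_len (level k)) * slope (level k)"
    using slope_pos[of "level k"] by (auto intro!: mult_right_mono)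
  then show "log_weight m2 - log_weight m1 \<le> real (m2 - m1) * slope (level k)"
    and "log_weight m2 - log_weight m1 \<le> real (level k)"
    using le_card slope_mult_block_len[of "level k"] by (simp_all add: mult.commute)
qed

lemma stage_containing:
  assumes "block_start k0 \<le> N"
  shows "\<exists>k\<ge>k0. block_start k \<le> N \<and> N < block_start (Suc k)"
proof -
  define K where "K = {k. block_start k \<le> N}"
  have "K \<subseteq> {..N}" using le_stage_start unfolding K_def by (auto intro: le_trans)
  then have fin: "finite K" using finite_subset by blast
  have k0: "k0 \<in> K" using assms unfolding K_def by simp
  define k where "k = Max K"
  have "k \<in> K" unfolding k_def using fin k0 by (intro Max_in) auto
  moreover have "k0 \<le> k" unfolding k_def using fin k0 by simp
  moreover have "Suc k \<notin> K" using fin unfolding k_def by (metis Max_ge Suc_n_not_le_n)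
  ultimately show ?thesis unfolding K_def by (intro exI[of _ k]) auto
qed

lemma dilation_below_stage_le:
  fixes x y :: real
  assumes "block_start k \<le> N" "2 ^ N < y" "0 < x" "x * y \<le> 2 ^ Suc (stage_start k)"
  shows "x \<le> (1/2) ^ k"
proof -
  have "(2::real) ^ block_start k \<le> 2 ^ N" using assms(1) by (intro power_increasing) auto
  then have y: "2 ^ block_start k \<le> y" using assms(2) by linarith
  have "0 < y" using y zero_less_power[of "2::real" "block_start k"] by linarith
  then have "x = (x * y) / y" by simp
  also have "\<dots> \<le> 2 ^ Suc (stage_start k) / 2 ^ block_start k"
    using assms y by (intro frac_le) auto
  also have "\<dots> = (1/2) ^ k" by (simp add: power_add power_divide)
  finally show ?thesis .
qed

lemma max_slope_log_le:
  fixes a D x s :: real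
  assumes a: "0 \<le> a" "a \<le> 2 powr - D" and x: "0 < x" "x \<le> 2 powr s" and s: "s * a \<le> 1 - D"
  shows "max a (1 + a * ln x) \<le> 2 * 2 powr - D"
proof -
  have "1 + a * ln x \<le> x powr a"
    using x exp_ge_add_one_self[of "a * ln x"] by (simp add: powr_def mult.commute)
  also have "\<dots> \<le> (2 powr s) powr a" using x a by (intro powr_mono2) auto
  also have "\<dots> \<le> 2 powr (1 - D)" using s by (simp add: powr_powr)
  also have "\<dots> = 2 * 2 powr - D" by (simp add: powr_diff powr_minus divide_inverse)
  finally show ?thesis using a by simp
qed

context
  fixes p :: real
  assumes p: "1 < p"
begin

definition kappa :: real where
  "kappa = 1 / 2 powr (p + 1)"

definition Phi_term :: "nat \<Rightarrow> real \<Rightarrow> real" where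
  "Phi_term j y = weight j * (max 0 (y - 2 ^ j)) powr p"

text \<open>Only the terms with \<open>2 ^ j < y\<close> are nonzero, so truncating the series at \<open>\<lceil>y\<rceil>\<close> loses nothing.\<close>
definition Phi :: "real \<Rightarrow> real" where
  "Phi y = (\<Sum>j<nat \<lceil>y\<rceil>. Phi_term j y)"

lemma kappa_pos: "0 < kappa"
  by (simp add: kappa_def)

lemma kappa_le_1: "kappa \<le> 1"
  using p by (simp add: kappa_def ge_one_powr_ge_zero)

lemma Phi_term_nonneg: "0 \<le> Phi_term j y"
  by (simp add: Phi_term_def weight_nonneg)

lemma Phi_term_eq_0: "y \<le> 2 ^ j \<Longrightarrow> Phi_term j y = 0"
  by (simp add: Phi_term_def)

lemma Phi_term_mono: "x \<le> y \<Longrightarrow> Phi_term j x \<le> Phi_term j y"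
  unfolding Phi_term_def using p weight_nonneg by (intro mult_left_mono powr_mono2) auto

lemma convex_on_Phi_term: "convex_on UNIV (Phi_term j)"
  unfolding Phi_term_def using p weight_nonneg by (intro convex_on_cmul convex_on_hinge_powr) auto

lemma Phi_term_dilation:
  assumes "0 \<le> x" "x \<le> 1"
  shows "Phi_term j (x * y) \<le> x powr p * Phi_term j y"
proof -
  have "(max 0 (x * y - 2 ^ j)) powr p \<le> (x * max 0 (y - 2 ^ j)) powr p"
    using hinge_scale_le[OF assms, of "2 ^ j" y] p by (intro powr_mono2) auto
  also have "\<dots> = x powr p * (max 0 (y - 2 ^ j)) powr p" using assms by (simp add: powr_mult)
  finally show ?thesis unfolding Phi_term_def using weight_nonneg
    by (metis mult.left_commute mult_left_mono)
qed

lemma Phi_eq_sum: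
  assumes "\<And>j. n \<le> j \<Longrightarrow> y \<le> 2 ^ j"
  shows "Phi y = (\<Sum>j<n. Phi_term j y)"
proof -
  have vanish: "Phi_term j y = 0" if "nat \<lceil>y\<rceil> \<le> j \<or> n \<le> j" for j
  proof (rule Phi_term_eq_0)
    show "y \<le> 2 ^ j" using that assms real_le_two_power[of j] by (auto intro: order_trans)
  qed
  have "Phi y = (\<Sum>j<max n (nat \<lceil>y\<rceil>). Phi_term j y)"
    unfolding Phi_def by (rule sum.mono_neutral_left) (auto simp: vanish)
  also have "\<dots> = (\<Sum>j<n. Phi_term j y)"
    by (rule sum.mono_neutral_right) (auto simp: vanish)
  finally show ?thesis .
qed

lemma Phi_eq_sum_ceiling: "y \<le> z \<Longrightarrow> Phi y = (\<Sum>j<nat \<lceil>z\<rceil>. Phi_term j y)"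
  by (rule Phi_eq_sum) (use real_le_two_power in \<open>fastforce intro: order_trans\<close>)

lemma Phi_nonneg: "0 \<le> Phi y"
  unfolding Phi_def by (intro sum_nonneg Phi_term_nonneg)

lemma Phi_ge_first_term:
  assumes "1 \<le> y"
  shows "(y - 1) powr p \<le> Phi y"
proof -
  have "Phi_term 0 y \<le> Phi y"
    unfolding Phi_def using assms by (intro member_le_sum Phi_term_nonneg) auto
  then show ?thesis using assms by (simp add: Phi_term_def weight_def)
qed

lemma Phi_pos: "1 < y \<Longrightarrow> 0 < Phi y"
  using Phi_ge_first_term[of y] by (smt (verit) powr_gt_zero)

lemma orlicz_Phi: "orlicz Phi"
  unfolding orlicz_def
proof (intro conjI)
  show "mono_on {0..} Phi"
  proof (rule mono_onI)
    fix x y :: real assume "x \<le> y"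
    then show "Phi x \<le> Phi y"
      unfolding Phi_eq_sum_ceiling[OF \<open>x \<le> y\<close>] Phi_def[of y] by (intro sum_mono Phi_term_mono)
  qed
  show "convex_on {0..} Phi"
  proof (rule convex_onI)
    fix t x y :: real assume t: "0 < t" "t < 1"
    define z where "z = max x y"
    have "(1 - t) * x + t * y \<le> (1 - t) * z + t * z"
      using t by (intro add_mono mult_left_mono) (auto simp: z_def)
    then have "Phi ((1 - t) * x + t * y) = (\<Sum>j<nat \<lceil>z\<rceil>. Phi_term j ((1 - t) * x + t * y))"
      by (intro Phi_eq_sum_ceiling) (simp add: algebra_simps)
    also have "\<dots> \<le> (\<Sum>j<nat \<lceil>z\<rceil>. (1 - t) * Phi_term j x + t * Phi_term j y)"
      using t by (intro sum_mono convex_onD[OF convex_on_Phi_term, simplified]) auto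
    also have "\<dots> = (1 - t) * Phi x + t * Phi y"
      by (simp add: Phi_eq_sum_ceiling[of x z] Phi_eq_sum_ceiling[of y z] z_def sum.distrib sum_distrib_left)
    finally show "Phi ((1 - t) *\<^sub>R x + t *\<^sub>R y) \<le> (1 - t) * Phi x + t * Phi y" by simp
  qed simp
  show "Phi 0 = 0" by (simp add: Phi_def)
  show "filterlim Phi at_top at_top"
  proof (rule filterlim_at_top_mono)
    show "filterlim (\<lambda>y::real. y - 1) at_top at_top"
      by (rule filterlim_tendsto_add_at_top[of "\<lambda>_. -1", simplified]) (auto intro: filterlim_ident)
    show "\<forall>\<^sub>F y in at_top. y - 1 \<le> Phi y"
    proof (rule eventually_at_top_linorderI[of 2])
      fix y :: real assume y: "2 \<le> y"
      have "y - 1 = (y - 1) powr 1" using y by simp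
      also have "\<dots> \<le> (y - 1) powr p" using y p by (intro powr_mono) auto
      also have "\<dots> \<le> Phi y" using y by (intro Phi_ge_first_term) simp
      finally show "y - 1 \<le> Phi y" .
    qed
  qed
qed

lemma Phi_ratio_le_powr:
  assumes "1 < y" "x \<in> {0..1}"
  shows "Phi (x * y) / Phi y \<le> x powr p"
proof -
  have "Phi (x * y) = (\<Sum>j<nat \<lceil>y\<rceil>. Phi_term j (x * y))"
    using assms by (intro Phi_eq_sum_ceiling) (simp add: mult_left_le_one_le)
  also have "\<dots> \<le> (\<Sum>j<nat \<lceil>y\<rceil>. x powr p * Phi_term j y)"
    using assms by (intro sum_mono Phi_term_dilation) auto
  also have "\<dots> = x powr p * Phi y" by (simp add: Phi_def sum_distrib_left)
  finally show ?thesis using Phi_pos[OF assms(1)] by (simp add: divide_le_eq mult.commute)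
qed

lemma Phi_le_log_weight:
  assumes "0 \<le> y" "y \<le> 2 ^ Suc N"
  shows "Phi y \<le> y powr p * 2 powr log_weight N"
proof -
  have "Phi y = (\<Sum>j<Suc N. Phi_term j y)"
  proof (rule Phi_eq_sum)
    fix j assume "Suc N \<le> j"
    then have "(2::real) ^ Suc N \<le> 2 ^ j" by (intro power_increasing) auto
    then show "y \<le> 2 ^ j" using assms by simp
  qed
  also have "\<dots> \<le> (\<Sum>j<Suc N. weight j * y powr p)"
    unfolding Phi_term_def using assms p weight_nonneg
    by (intro sum_mono mult_left_mono powr_mono2) auto
  also have "\<dots> = y powr p * 2 powr log_weight N"
    unfolding sum_distrib_right[symmetric] sum_weight by (simp add: mult.commute)
  finally show ?thesis .
qed

lemma Phi_ge_log_weight: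
  assumes "1 \<le> M" "2 ^ M < y"
  shows "(y / 2) powr p * 2 powr log_weight (M - 1) \<le> Phi y"
proof -
  have M_le: "M \<le> nat \<lceil>y\<rceil>" using real_le_two_power[of M] assms by linarith
  have "(y / 2) powr p * 2 powr log_weight (M - 1) = (\<Sum>j<M. weight j * (y / 2) powr p)"
    using sum_weight[of "M - 1"] assms(1) by (simp add: sum_distrib_right[symmetric] mult.commute)
  also have "\<dots> \<le> (\<Sum>j<M. Phi_term j y)"
  proof (intro sum_mono)
    fix j assume "j \<in> {..<M}"
    then have "(2::real) ^ Suc j \<le> 2 ^ M" by (intro power_increasing) auto
    then have "y / 2 \<le> y - 2 ^ j" using assms by simp
    then have "y / 2 \<le> max 0 (y - 2 ^ j)" by (rule order_trans) simp
    moreover have "0 \<le> y / 2" using assms(2) zero_less_power[of "2::real" M] by linarith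
    ultimately show "weight j * (y / 2) powr p \<le> Phi_term j y"
      unfolding Phi_term_def using p weight_nonneg by (intro mult_left_mono powr_mono2) auto
  qed
  also have "\<dots> \<le> Phi y"
    unfolding Phi_def using M_le by (intro sum_mono2) (auto simp: Phi_term_nonneg)
  finally show ?thesis .
qed

lemma Phi_ratio_ge_log_weight:
  assumes "1 \<le> M" "2 ^ M < x * y" "2 ^ N < y" "y \<le> 2 ^ Suc N" "0 < x"
  shows "(x / 2) powr p * 2 powr - (log_weight N - log_weight (M - 1)) \<le> Phi (x * y) / Phi y"
proof -
  have y: "0 < y" "1 < y" using assms(3) one_le_power[of "2::real" N] by linarith+
  have "(x / 2) powr p * 2 powr - (log_weight N - log_weight (M - 1))
      = ((x * y / 2) powr p * 2 powr log_weight (M - 1)) / (y powr p * 2 powr log_weight N)"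
    using assms y by (simp add: powr_mult powr_divide powr_diff powr_minus field_simps)
  also have "\<dots> \<le> Phi (x * y) / Phi y"
    using Phi_ge_log_weight[OF assms(1,2)] Phi_le_log_weight[of y N] Phi_pos[OF y(2)]
      Phi_nonneg[of "x * y"] assms y
    by (intro frac_le) auto
  finally show ?thesis .
qed

lemma Phi_ratio_ge_lower_env:
  assumes M: "1 \<le> M" "M \<le> N" "2 ^ M < x * y" "x * y \<le> 2 ^ Suc M"
    and N: "2 ^ N < y" "y \<le> 2 ^ Suc N" and x: "0 < x" and m: "1 \<le> m"
    and growth: "log_weight N - log_weight (M - 1) \<le> real (N - (M - 1)) * slope m"
      "log_weight N - log_weight (M - 1) \<le> real m"
  shows "lower_env kappa p (slope m) x \<le> Phi (x * y) / Phi y"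
proof -
  define D where "D = log_weight N - log_weight (M - 1)"
  have y: "0 < y" using N(1) zero_less_power[of "2::real" N] by linarith
  have slope_le: "slope m \<le> 2 powr - D"
  proof -
    have "slope m = 2 powr - real m" by (simp add: slope_def powr_minus powr_realpow power_divide inverse_eq_divide)
    also have "\<dots> \<le> 2 powr - D" using growth(2) by (simp add: D_def)
    finally show ?thesis .
  qed
  have "x = (x * y) / y" using y by simp
  also have "\<dots> \<le> 2 ^ Suc M / 2 ^ N" using M N x y by (intro frac_le) auto
  also have "\<dots> = 2 powr (real (Suc M) - real N)"
    using powr_realpow[of 2 "Suc M"] powr_realpow[of 2 N] by (simp only: powr_diff)
  finally have x_le: "x \<le> 2 powr (real (Suc M) - real N)" .
  have "(real (Suc M) - real N) * slope m = 2 * slope m - real (N - (M - 1)) * slope m"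
    using M by (simp add: of_nat_diff algebra_simps)
  also have "\<dots> \<le> 1 - D" using growth(1) slope_le_half[OF m] by (simp add: D_def)
  finally have "max (slope m) (1 + slope m * ln x) \<le> 2 * 2 powr - D"
    using max_slope_log_le[OF less_imp_le[OF slope_pos] slope_le x x_le] by simp
  then have "lower_env kappa p (slope m) x \<le> (x / 2) powr p * 2 powr - D"
    using x by (simp add: lower_env_def kappa_def powr_add powr_divide field_simps)
  also have "\<dots> \<le> Phi (x * y) / Phi y"
    unfolding D_def using Phi_ratio_ge_log_weight M N x by simp
  finally show ?thesis .
qed

lemma Phi_ratio_ge_in_stage:
  assumes k: "block_start k \<le> N" "N < block_start (Suc k)"
    and N: "2 ^ N < y" "y \<le> 2 ^ Suc N" and x: "x \<in> {0<..1}"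
    and large: "2 ^ Suc (stage_start k) < x * y"
  shows "lower_env kappa p (slope (level k)) x \<le> Phi (x * y) / Phi y"
proof -
  have "1 < x * y" using large one_le_power[of "2::real" "Suc (stage_start k)"] by linarith
  then obtain M where M: "2 ^ M < x * y" "x * y \<le> 2 ^ Suc M" using exists_dyadic_bracket by blast
  have "(2::real) ^ Suc (stage_start k) < 2 ^ Suc M" using large M by linarith
  then have "stage_start k < M" by simp
  have "0 < y" using N(1) zero_less_power[of "2::real" N] by linarith
  then have "x * y \<le> y" using x by (simp add: mult_left_le_one_le)
  then have "(2::real) ^ M < 2 ^ Suc N" using M N by linarith
  then have "M < Suc N" by (rule power_less_imp_less_exp[rotated]) simp
  then have "M \<le> N" by simp
  have "log_weight N - log_weight (M - 1) \<le> real (N - (M - 1)) * slope (level k)"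
    "log_weight N - log_weight (M - 1) \<le> real (level k)"
    using \<open>stage_start k < M\<close> \<open>M \<le> N\<close> k by (intro log_weight_increment_le; simp)+
  then show ?thesis
    using \<open>stage_start k < M\<close> \<open>M \<le> N\<close> M N x level_pos
    by (intro Phi_ratio_ge_lower_env) auto
qed

lemma Phi_ratio_eventually_ge:
  assumes e: "e > 0"
  shows "\<exists>A. \<forall>y>A. \<exists>a\<in>{0..1}. \<forall>x\<in>{0<..1}. lower_env kappa p a x - e \<le> Phi (x * y) / Phi y"
proof -
  obtain k0 where k0: "(1/2::real) ^ k0 < e" using real_arch_pow_inv[OF e, of "1/2"] by auto
  show ?thesis
  proof (intro exI[of _ "2 ^ Suc (block_start k0) :: real"] allI impI)
    fix y :: real assume y: "2 ^ Suc (block_start k0) < y"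
    then have "1 < y" using one_le_power[of "2::real" "Suc (block_start k0)"] by linarith
    then obtain N where N: "2 ^ N < y" "y \<le> 2 ^ Suc N" using exists_dyadic_bracket by blast
    then have "(2::real) ^ Suc (block_start k0) < 2 ^ Suc N" using y by linarith
    then have "Suc (block_start k0) < Suc N" by (rule power_less_imp_less_exp[rotated]) simp
    then obtain k where k: "k0 \<le> k" "block_start k \<le> N" "N < block_start (Suc k)"
      using stage_containing[of k0 N] by auto
    show "\<exists>a\<in>{0..1}. \<forall>x\<in>{0<..1}. lower_env kappa p a x - e \<le> Phi (x * y) / Phi y"
    proof (intro bexI[of _ "slope (level k)"] ballI)
      fix x :: real assume x: "x \<in> {0<..1}"
      show "lower_env kappa p (slope (level k)) x - e \<le> Phi (x * y) / Phi y"
      proof (cases "x * y \<le> 2 ^ Suc (stage_start k)")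
        case True
        have "x \<le> (1/2) ^ k" using k(2) N(1) x True by (intro dilation_below_stage_le) auto
        also have "\<dots> \<le> (1/2) ^ k0" using k(1) by (intro power_decreasing) auto
        finally have "x < e" using k0 by linarith
        moreover have "lower_env kappa p (slope (level k)) x \<le> x"
          using kappa_pos kappa_le_1 p slope_level_in_unit x by (intro lower_env_le_self) auto
        moreover have "0 \<le> Phi (x * y) / Phi y" by (simp add: Phi_nonneg)
        ultimately show ?thesis by linarith
      next
        case False
        then show ?thesis using Phi_ratio_ge_in_stage[OF k(2,3) N x] e by simp
      qed
    qed (rule slope_level_in_unit)
  qed
qed

text \<open>After normalising by its value at 2 ^ block_len m, this is the limit of the dilation profiles
  x \<mapsto> Phi (x * y) / Phi y as y runs through the ends of the blocks of level m.\<close>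

definition model :: "nat \<Rightarrow> real \<Rightarrow> real" where
  "model m u = (max 0 u) powr p + (\<Sum>i<block_len m. block_weight m i * (max 0 (u - 2 ^ i)) powr p)"

lemma model_mono: "u \<le> v \<Longrightarrow> model m u \<le> model m v"
  unfolding model_def using p block_weight_nonneg
  by (intro add_mono sum_mono mult_left_mono powr_mono2) auto

lemma powr_le_model: "0 \<le> u \<Longrightarrow> u powr p \<le> model m u"
  unfolding model_def using block_weight_nonneg by (simp add: sum_nonneg)

lemma model_one: "model m 1 = 1"
proof -
  have "max 0 (1 - (2::real) ^ i) = 0" for i by simp
  then show ?thesis by (simp add: model_def)
qed

lemma continuous_on_model: "continuous_on UNIV (model m)"
  unfolding model_def using p by (intro continuous_intros continuous_on_powr') auto

lemma model_ge:
  assumes "1 \<le> m"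
  shows "(2 ^ block_len m / 2) powr p * 2 ^ m \<le> model m (2 ^ block_len m)"
proof -
  define n where "n = block_len m"
  define z :: real where "z = 2 ^ n"
  have z: "1 \<le> z" by (simp add: z_def)
  have "(z / 2) powr p * (2 ^ m - 1) = (\<Sum>i<n. block_weight m i * (z / 2) powr p)"
    using sum_block_weight[of m n] slope_mult_block_len[of m]
    by (simp add: n_def sum_distrib_right[symmetric] mult.commute powr_realpow)
  also have "\<dots> \<le> (\<Sum>i<n. block_weight m i * (max 0 (z - 2 ^ i)) powr p)"
  proof (intro sum_mono mult_left_mono block_weight_nonneg)
    fix i assume "i \<in> {..<n}"
    then have "(2::real) ^ Suc i \<le> z" unfolding z_def by (intro power_increasing) auto
    then have "z / 2 \<le> z - 2 ^ i" by simp
    then have "z / 2 \<le> max 0 (z - 2 ^ i)" by (rule order_trans) simp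
    then show "(z / 2) powr p \<le> (max 0 (z - 2 ^ i)) powr p"
      by (rule powr_mono2[rotated 2]) (use p z in auto)
  qed
  finally have "(z / 2) powr p * (2 ^ m - 1) + (z / 2) powr p \<le> model m z"
    using z p powr_mono2[of p "z / 2" z] unfolding model_def n_def by simp
  then show ?thesis by (simp add: algebra_simps z_def n_def)
qed

lemma Phi_terms_in_block:
  fixes u :: real and k :: nat
  assumes "0 \<le> u"
  defines "s \<equiv> (2::real) ^ Suc (block_start k)"
  shows "(\<Sum>i<block_len (level k). Phi_term (Suc (block_start k) + i) (s * u))
       = 2 powr log_weight (block_start k) * s powr p * (model (level k) u - u powr p)"
proof -
  have s: "0 < s" by (simp add: s_def)
  have "Phi_term (Suc (block_start k) + i) (s * u)
      = 2 powr log_weight (block_start k) * s powr p * (block_weight (level k) i * (max 0 (u - 2 ^ i)) powr p)"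
    if "i < block_len (level k)" for i
  proof -
    have "s * u - 2 ^ (Suc (block_start k) + i) = s * (u - 2 ^ i)"
      by (simp add: s_def power_add algebra_simps)
    then have "max 0 (s * u - 2 ^ (Suc (block_start k) + i)) = s * max 0 (u - 2 ^ i)"
      using s by (simp add: max_mult_distrib_left)
    then show ?thesis
      using weight_in_block[OF that] s by (simp add: Phi_term_def powr_mult)
  qed
  then show ?thesis
    using assms by (simp add: model_def sum_distrib_left)
qed

lemma Phi_scaled_split:
  fixes u :: real and k :: nat
  assumes "0 \<le> u" "u \<le> 2 ^ block_len (level k)"
  defines "s \<equiv> (2::real) ^ Suc (block_start k)"
  shows "Phi (s * u) = (\<Sum>j<Suc (stage_start k). Phi_term j (s * u))
           + 2 powr log_weight (block_start k) * s powr p * (model (level k) u - u powr p)"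
proof -
  let ?f = "\<lambda>j. Phi_term j (s * u)"
  define B where "B = Suc (block_start k)"
  define n where "n = block_len (level k)"
  have "Phi (s * u) = (\<Sum>j<B + n. ?f j)"
  proof (rule Phi_eq_sum)
    fix j assume "B + n \<le> j"
    then have "(2::real) ^ (B + n) \<le> 2 ^ j" by (intro power_increasing) auto
    moreover have "s * u \<le> 2 ^ (B + n)"
      using assms by (simp add: s_def B_def n_def power_add mult_left_mono)
    ultimately show "s * u \<le> 2 ^ j" by linarith
  qed
  also have "\<dots> = (\<Sum>j<Suc (stage_start k). ?f j) + (\<Sum>j\<in>{Suc (stage_start k)..<B}. ?f j)
      + (\<Sum>i<n. ?f (B + i))"
    unfolding lessThan_atLeast0
    using sum.atLeastLessThan_concat[of 0 "Suc (stage_start k)" B ?f]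
      sum.atLeastLessThan_concat[of 0 B "B + n" ?f] sum.shift_bounds_nat_ivl[of ?f 0 B n]
    by (simp add: B_def add.commute)
  also have "(\<Sum>j\<in>{Suc (stage_start k)..<B}. ?f j) = 0"
  proof (intro sum.neutral ballI)
    fix j assume "j \<in> {Suc (stage_start k)..<B}"
    then have "weight j = 0" by (intro weight_in_gap[of k]) (auto simp: B_def)
    then show "?f j = 0" by (simp add: Phi_term_def)
  qed
  finally show ?thesis
    using Phi_terms_in_block[OF assms(1), of k] unfolding B_def n_def s_def by simp
qed

lemma Phi_scaled_head_bounds:
  fixes u :: real and k :: nat
  assumes "0 \<le> u"
  defines "s \<equiv> (2::real) ^ Suc (block_start k)"
    and "c \<equiv> 2 powr log_weight (block_start k) * (2 ^ Suc (block_start k)) powr p"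
    and "\<eta> \<equiv> (1/2::real) ^ Suc (Suc k)"
  shows "c * (max 0 (u - \<eta>)) powr p \<le> (\<Sum>j<Suc (stage_start k). Phi_term j (s * u))"
    and "(\<Sum>j<Suc (stage_start k). Phi_term j (s * u)) \<le> c * u powr p"
proof -
  have s: "0 < s" by (simp add: s_def)
  have c_eq: "c * v = (\<Sum>j<Suc (stage_start k). weight j * (s powr p * v))" for v
    unfolding sum_distrib_right[symmetric] sum_weight_before_block by (simp add: c_def s_def)
  have "s powr p * (max 0 (u - \<eta>)) powr p \<le> (max 0 (s * u - 2 ^ j)) powr p"
    if "j < Suc (stage_start k)" for j
  proof -
    have "s * \<eta> = 2 ^ stage_start k" by (simp add: s_def \<eta>_def power_add power_divide)
    then have "s * max 0 (u - \<eta>) = max 0 (s * u - 2 ^ stage_start k)"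
      using s by (simp add: max_mult_distrib_left right_diff_distrib)
    also have "\<dots> \<le> max 0 (s * u - 2 ^ j)" using that by (intro max.mono) (auto intro: power_increasing)
    finally show ?thesis using s p by (simp add: powr_mult[symmetric] powr_mono2)
  qed
  then show "c * (max 0 (u - \<eta>)) powr p \<le> (\<Sum>j<Suc (stage_start k). Phi_term j (s * u))"
    unfolding c_eq Phi_term_def by (intro sum_mono mult_left_mono weight_nonneg) auto
  have "(max 0 (s * u - 2 ^ j)) powr p \<le> s powr p * u powr p" for j
  proof -
    have "(max 0 (s * u - 2 ^ j)) powr p \<le> (s * u) powr p" using s assms p by (intro powr_mono2) auto
    then show ?thesis using s assms by (simp add: powr_mult)
  qed
  then show "(\<Sum>j<Suc (stage_start k). Phi_term j (s * u)) \<le> c * u powr p"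
    unfolding c_eq Phi_term_def by (intro sum_mono mult_left_mono weight_nonneg)
qed

lemma Phi_scaled_bounds:
  fixes u :: real and k :: nat
  assumes u: "0 \<le> u" "u \<le> 2 ^ block_len (level k)"
  defines "s \<equiv> (2::real) ^ Suc (block_start k)"
    and "c \<equiv> 2 powr log_weight (block_start k) * (2 ^ Suc (block_start k)) powr p"
    and "\<eta> \<equiv> (1/2::real) ^ Suc (Suc k)"
    and "z \<equiv> (2::real) ^ block_len (level k)"
  shows "c * (model (level k) u - p * \<eta> * model (level k) z) \<le> Phi (s * u)"
    and "Phi (s * u) \<le> c * model (level k) u"
proof -
  note split = Phi_scaled_split[OF u, folded s_def c_def]
  note head = Phi_scaled_head_bounds[OF u(1), of k, folded s_def c_def \<eta>_def]
  have c: "0 < c" by (simp add: c_def)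
  have "\<eta> \<le> 1" unfolding \<eta>_def by (rule power_le_one) auto
  then have "u powr p - (max 0 (u - \<eta>)) powr p \<le> p * \<eta> * z powr p"
    using u p by (intro powr_minus_hinge_le) (auto simp: z_def \<eta>_def)
  also have "\<dots> \<le> p * \<eta> * model (level k) z"
    using p by (intro mult_left_mono powr_le_model) (auto simp: z_def \<eta>_def)
  finally have "c * (u powr p - (max 0 (u - \<eta>)) powr p) \<le> c * (p * \<eta> * model (level k) z)"
    using c by simp
  then show "c * (model (level k) u - p * \<eta> * model (level k) z) \<le> Phi (s * u)"
    using split head(1) by (simp add: algebra_simps)
  show "Phi (s * u) \<le> c * model (level k) u"
    using split head(2) by (simp add: algebra_simps)
qed

lemma Phi_ratio_near_model:
  fixes x :: real and k :: nat
  assumes x: "x \<in> {0..1}" and small: "p * (1/2) ^ Suc (Suc k) \<le> 1/2"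
  defines "y \<equiv> (2::real) ^ Suc (block_start k) * 2 ^ block_len (level k)"
    and "z \<equiv> (2::real) ^ block_len (level k)"
  shows "\<bar>Phi (x * y) / Phi y - model (level k) (x * z) / model (level k) z\<bar>
      \<le> 2 * (p * (1/2) ^ Suc (Suc k))"
proof -
  define s :: real where "s = 2 ^ Suc (block_start k)"
  define c where "c = 2 powr log_weight (block_start k) * (2 ^ Suc (block_start k)) powr p"
  have z: "1 \<le> z" by (simp add: z_def)
  have xz: "0 \<le> x * z" "x * z \<le> z" using x z by (auto simp: mult_left_le_one_le)
  note at_xz = Phi_scaled_bounds[of "x * z" k, folded s_def c_def z_def]
  note at_z = Phi_scaled_bounds[of z k, folded s_def c_def z_def]
  have "\<bar>Phi (s * (x * z)) / Phi (s * z) - model (level k) (x * z) / model (level k) z\<bar>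
      \<le> 2 * (p * (1/2) ^ Suc (Suc k))"
  proof (rule abs_ratio_diff_le)
    show "0 < c" by (simp add: c_def)
    show "0 \<le> model (level k) (x * z)" using powr_le_model[OF xz(1)] by (smt (verit) powr_ge_zero)
    show "model (level k) (x * z) \<le> model (level k) z" using xz(2) by (rule model_mono)
    show "0 < model (level k) z" using powr_le_model[of z] z by (smt (verit) powr_gt_zero)
    show "0 \<le> p * (1/2) ^ Suc (Suc k)" using p by simp
    show "p * (1/2) ^ Suc (Suc k) \<le> 1/2" by (fact small)
    show "0 \<le> Phi (s * (x * z))" by (fact Phi_nonneg)
  qed (use at_xz at_z xz z in \<open>simp_all add: z_def algebra_simps\<close>)
  moreover have "y = s * z" by (simp add: y_def s_def z_def)
  ultimately show ?thesis by (simp add: mult.left_commute)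
qed

lemma model_profile_in_E_F:
  assumes m: "1 \<le> m"
  shows "restr01 (\<lambda>x. model m (x * 2 ^ block_len m) / model m (2 ^ block_len m)) \<in> E_F Phi"
proof -
  define z :: real where "z = 2 ^ block_len m"
  define H where "H = restr01 (\<lambda>x. model m (x * z) / model m z)"
  have z: "1 \<le> z" by (simp add: z_def)
  then have "0 < model m z" using powr_le_model[of z m] by (smt (verit) powr_gt_zero)
  then have "continuous_on {0..1} (\<lambda>x. model m (x * z) / model m z)"
    by (intro continuous_intros continuous_on_compose2[OF continuous_on_model]) auto
  then have "continuous_on {0..1} H"
    unfolding H_def restr01_def by (rule continuous_on_cong[THEN iffD1, rotated 2]) auto
  then have H_C01: "H \<in> C01" unfolding C01_def H_def restr01_def by auto
  have "H \<in> E_FA Phi A" if "A > 0" for A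
    unfolding E_FA_def sup_closure_def
  proof (intro CollectI conjI allI impI H_C01)
    fix e :: real assume e: "0 < e"
    have "0 < min e 1 / (2 * p)" using e p by simp
    then obtain r where r: "(1/2::real) ^ r < min e 1 / (2 * p)"
      using real_arch_pow_inv[of _ "1/2"] by force
    obtain k where k: "max r (nat \<lceil>A\<rceil>) \<le> k" "level k = m" using level_recurs[OF m] by blast
    have "2 * (p * (1/2::real) ^ Suc (Suc k)) \<le> 2 * (p * (1/2) ^ r)"
      using k p by (intro mult_left_mono power_decreasing) auto
    also have "\<dots> < 2 * (p * (min e 1 / (2 * p)))"
      using r p by (intro mult_strict_left_mono) auto
    also have "\<dots> = min e 1" using p by simp
    finally have close: "2 * (p * (1/2::real) ^ Suc (Suc k)) < min e 1" .
    define y :: real where "y = 2 ^ Suc (block_start k) * z"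
    have "A \<le> real k" using k by linarith
    also have "\<dots> \<le> 2 ^ k" by (rule real_le_two_power)
    also have "\<dots> \<le> 2 ^ Suc (block_start k)" by (intro power_increasing) auto
    also have "\<dots> < y" using one_less_power[of "2::real" "block_len m"] block_len_pos[OF m]
      by (simp add: y_def z_def)
    finally have "A < y" .
    moreover have "\<bar>H x - restr01 (\<lambda>x. Phi (x * y) / Phi y) x\<bar> < e" if "x \<in> {0..1}" for x
      using Phi_ratio_near_model[OF that, of k] close k that
      by (simp add: H_def restr01_def y_def z_def abs_minus_commute)
    ultimately show "\<exists>g\<in>{restr01 (\<lambda>x. Phi (x * y) / Phi y) |y. A < y}. \<forall>x\<in>{0..1}. \<bar>H x - g x\<bar> < e"
      by blast
  qed
  then show ?thesis by (simp add: E_F_def H_def z_def)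
qed

lemma model_profile_at_inverse_scale:
  assumes m: "1 \<le> m"
  defines "z \<equiv> (2::real) ^ block_len m"
  shows "restr01 (\<lambda>x. model m (x * z) / model m z) (1 / z) \<le> (1 / z) powr p * (2 powr p * (1/2) ^ m)"
proof -
  have z: "1 \<le> z" by (simp add: z_def)
  have pos: "0 < (z / 2) powr p * 2 ^ m" using z by simp
  have bound: "(z / 2) powr p * 2 ^ m \<le> model m z" unfolding z_def using m by (rule model_ge)
  have "restr01 (\<lambda>x. model m (x * z) / model m z) (1 / z) = 1 / model m z"
    using z by (simp add: restr01_def model_one)
  also have "\<dots> \<le> 1 / ((z / 2) powr p * 2 ^ m)"
    using pos bound by (intro divide_left_mono mult_pos_pos) auto
  also have "\<dots> = (1 / z) powr p * (2 powr p * (1/2) ^ m)"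
  proof -
    have "(1 / z) powr p = 1 / z powr p" "(z / 2) powr p = z powr p / 2 powr p"
      using z by (simp_all add: powr_divide)
    moreover have "0 < z powr p" "0 < (2::real) powr p" using z by auto
    ultimately show ?thesis by (simp add: power_one_over)
  qed
  finally show ?thesis .
qed

lemma E_F_Phi_not_uniform: "\<not> equiv_unif (E_F Phi) (\<lambda>t. t powr p)"
proof
  assume "equiv_unif (E_F Phi) (\<lambda>t. t powr p)"
  then obtain C where C: "C > 0" "\<And>H t. H \<in> E_F Phi \<Longrightarrow> t \<in> {0<..1} \<Longrightarrow> t powr p / C \<le> H t"
    unfolding equiv_unif_def by blast
  have "0 < 1 / (C * 2 powr p)" using C by simp
  then obtain m0 where m0: "(1/2::real) ^ m0 < 1 / (C * 2 powr p)"
    using real_arch_pow_inv[of _ "1/2"] by force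
  define m where "m = Suc m0"
  have m: "1 \<le> m" by (simp add: m_def)
  have "2 powr p * (1/2::real) ^ m \<le> 2 powr p * (1/2) ^ m0"
    unfolding m_def by (intro mult_left_mono power_decreasing) auto
  also have "\<dots> < 2 powr p * (1 / (C * 2 powr p))"
    using m0 by (intro mult_strict_left_mono) auto
  also have "\<dots> = 1 / C" by simp
  finally have small: "2 powr p * (1/2) ^ m < 1 / C" .
  define t :: real where "t = 1 / 2 ^ block_len m"
  have t: "t \<in> {0<..1}" by (simp add: t_def)
  let ?H = "restr01 (\<lambda>x. model m (x * 2 ^ block_len m) / model m (2 ^ block_len m))"
  have "?H t \<le> t powr p * (2 powr p * (1/2) ^ m)"
    unfolding t_def using m by (rule model_profile_at_inverse_scale)
  also have "\<dots> < t powr p * (1 / C)"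
    using small t by (intro mult_strict_left_mono) auto
  finally have "?H t < t powr p / C" by simp
  moreover have "t powr p / C \<le> ?H t" by (rule C(2)[OF model_profile_in_E_F[OF m] t])
  ultimately show False by linarith
qed

end

theorem mainTheorem2:
  fixes p :: real
  assumes "1 < p"
  shows "\<exists>\<Phi>. orlicz \<Phi> \<and> equiv_each (C_F \<Phi>) (\<lambda>t. t powr p)
              \<and> \<not> equiv_unif (E_F \<Phi>) (\<lambda>t. t powr p)"
proof (intro exI conjI)
  show "orlicz (Phi p)" using assms by (rule orlicz_Phi)
  have E_env: "enveloped (kappa p) p H" if "H \<in> E_F (Phi p)" for H
    using Phi_ratio_le_powr[OF assms] Phi_ratio_eventually_ge[OF assms] that by (rule E_F_enveloped)
  have "enveloped (kappa p) p G" if "G \<in> C_F (Phi p)" for G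
    using less_imp_le[OF kappa_pos[OF assms]] E_env that by (rule C_F_enveloped)
  then show "equiv_each (C_F (Phi p)) (\<lambda>t. t powr p)"
    by (rule equiv_each_powr_if_enveloped[OF kappa_pos[OF assms] kappa_le_1[OF assms]])
  show "\<not> equiv_unif (E_F (Phi p)) (\<lambda>t. t powr p)" using assms by (rule E_F_Phi_not_uniform)
qed

end
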